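(* Let $d\ge2$ be an integer, $D_1,\dots,D_d$ real constants, $D=\sum_iD_i$, and let $m:[-D^2/d,\pi^2/d)\to[0,\infty)$ be defined by (with $\mu=-\lambda$ for $\lambda<0$) $$m(\lambda)=\begin{cases}0 & \text{if } \lambda=-D^2/d<0,\\[2pt] \left|\ln\left(\dfrac{\big(\frac{e^{\sqrt{d\mu}}}{\sqrt{-C_-}}+1\big)\big(-\frac{1}{\sqrt{-C_-}}+1\big)}{\big(1-\frac{e^{\sqrt{d\mu}}}{\sqrt{-C_-}}\big)\big(1+\frac{1}{\sqrt{-C_-}}\big)}\right)\right| & \text{if } -D^2/d<\lambda<0,\\[2pt] |D| & \text{if } \lambda=0,\\[2pt] \left|\ln\dfrac{\tan(C_++\sqrt{d\lambda})+\sec(C_++\sqrt{d\lambda})}{\tan(C_+)+\sec(C_+)}\right| & \text{if } 0<\lambda<\pi^2/d,\end{cases}$$ where $C_-=\dfrac{e^{2\sqrt{d\mu}}-e^{D+\sqrt{d\mu}}}{e^{D+\sqrt{d\mu}}-1}$ and $C_+=\arctan\left(\dfrac{\cos(\sqrt{d\lambda})-e^D}{\sin(\sqrt{d\lambda})}\right)$. Then $m$ is monotone increasing.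
   Context: For $-D^2/d<\lambda<0$ one has $C_-<0$, so $\sqrt{-C_-}$ is defined. *)

theory Defs
  imports Complex_Main
begin

definition Cminus :: "nat \<Rightarrow> real \<Rightarrow> real \<Rightarrow> real" where
  "Cminus d D mu =
     (exp (2 * sqrt (real d * mu)) - exp (D + sqrt (real d * mu))) /
     (exp (D + sqrt (real d * mu)) - 1)"

definition Cplus :: "nat \<Rightarrow> real \<Rightarrow> real \<Rightarrow> real" where
  "Cplus d D lam =
     arctan ((cos (sqrt (real d * lam)) - exp D) / sin (sqrt (real d * lam)))"

definition sec :: "real \<Rightarrow> real" where
  "sec x = 1 / cos x"

text \<open>The function m on [-D^2/d, pi^2/d); values outside this interval are irrelevant.\<close>
definition mfun :: "nat \<Rightarrow> real \<Rightarrow> real \<Rightarrow> real" where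
  "mfun d D lam =
    (if lam < 0 \<and> lam = - D\<^sup>2 / real d then 0
     else if - D\<^sup>2 / real d < lam \<and> lam < 0 then
       (let mu = - lam; c = sqrt (- Cminus d D mu); s = sqrt (real d * mu) in
        \<bar>ln (((exp s / c + 1) * (- (1 / c) + 1)) /
             ((1 - exp s / c) * (1 + 1 / c)))\<bar>)
     else if lam = 0 then \<bar>D\<bar>
     else
       (let s = sqrt (real d * lam); cp = Cplus d D lam in
        \<bar>ln ((tan (cp + s) + sec (cp + s)) / (tan cp + sec cp))\<bar>))"

end

theory Submission
  imports Defs
begin

(* For v > 0, tanh (|ln v| / 2) = |v - 1| / (v + 1). In each of the four regimes the argument v
   of the logarithm satisfies ((v - 1) / (v + 1))^2 = (cosh D - w) / (cosh D + 1) with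
   w = cos_sqrt (d * lambda), the entire function cos (sqrt x) evaluated at x = d * lambda. Since w
   decreases in lambda on the whole interval, tanh (m / 2) increases, and hence so does m >= 0. *)

lemma tanh_half_abs_ln:
  fixes v :: real
  assumes "v \<noteq> -1" and "((v - 1) / (v + 1))\<^sup>2 < 1"
  shows "(tanh (\<bar>ln v\<bar> / 2))\<^sup>2 = ((v - 1) / (v + 1))\<^sup>2"
proof -
  have "(v - 1)\<^sup>2 < (v + 1)\<^sup>2"
    using assms by (simp add: power_divide divide_less_eq)
  then have v: "v > 0" by (simp add: power2_eq_square algebra_simps)
  have "(tanh (\<bar>ln v\<bar> / 2))\<^sup>2 = (tanh (ln (sqrt v)))\<^sup>2"
  proof -
    have "\<bar>ln v\<bar> / 2 = \<bar>ln v / 2\<bar>" by simp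
    then show ?thesis using v by (simp only: tanh_real_abs power2_abs ln_sqrt)
  qed
  also have "\<dots> = (((sqrt v)\<^sup>2 - 1) / ((sqrt v)\<^sup>2 + 1))\<^sup>2"
    using v by (simp add: tanh_ln_real)
  finally show ?thesis using v by simp
qed

lemma quotient_minus_one_over_plus_one:
  fixes P Q :: real
  assumes "Q \<noteq> 0" and "P + Q \<noteq> 0"
  shows "P / Q \<noteq> -1" and "(P / Q - 1) / (P / Q + 1) = (P - Q) / (P + Q)"
proof -
  have "P / Q + 1 = (P + Q) / Q" and "P / Q - 1 = (P - Q) / Q"
    using assms(1) by (simp_all add: field_simps)
  then show "P / Q \<noteq> -1" and "(P / Q - 1) / (P / Q + 1) = (P - Q) / (P + Q)"
    using assms by auto
qed

lemma cosh_ratio_eq_exp: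
  fixes D x :: real
  shows "(cosh D - x) / (cosh D + 1) = ((exp D)\<^sup>2 - 2 * exp D * x + 1) / (exp D + 1)\<^sup>2"
proof -
  define b where "b = exp D"
  have b: "b > 0" by (simp add: b_def)
  have "cosh D = (b + 1 / b) / 2"
    by (simp add: b_def cosh_field_def exp_minus inverse_eq_divide)
  then have "cosh D - x = (b\<^sup>2 - 2 * b * x + 1) / (2 * b)"
    and "cosh D + 1 = (b + 1)\<^sup>2 / (2 * b)"
    using b by (simp_all add: field_simps power2_eq_square)
  then show ?thesis using b by (simp add: b_def)
qed

lemma cosh_ratio_less_1:
  fixes D x :: real
  assumes "x > -1"
  shows "(cosh D - x) / (cosh D + 1) < 1"
  using assms cosh_real_ge_1[of D] by (simp add: divide_less_eq)

lemma tan_plus_sec_arctan: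
  fixes s b :: real
  assumes sin_s: "sin s > 0" and b: "b \<noteq> 0"
  defines "cp \<equiv> arctan ((cos s - b) / sin s)"
    and "R \<equiv> sqrt ((cos s - b)\<^sup>2 + (sin s)\<^sup>2)"
  shows "tan cp + sec cp = (cos s - b + R) / sin s"
    and "tan (cp + s) + sec (cp + s) = (1 - b * cos s + R) / (b * sin s)"
proof -
  have R: "R > 0" using sin_s by (simp add: R_def add_nonneg_pos)
  have R2: "R\<^sup>2 = (cos s - b)\<^sup>2 + (sin s)\<^sup>2" by (simp add: R_def)
  have "sqrt (1 + ((cos s - b) / sin s)\<^sup>2) = R / sin s"
    using sin_s by (simp add: R_def power_divide field_simps real_sqrt_divide)
  then have cos_cp: "cos cp = sin s / R" and sin_cp: "sin cp = (cos s - b) / R"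
    using sin_s by (simp_all add: cp_def cos_arctan sin_arctan)
  show "tan cp + sec cp = (cos s - b + R) / sin s"
    using R sin_s by (simp add: tan_def sec_def cos_cp sin_cp field_simps)
  show "tan (cp + s) + sec (cp + s) = (1 - b * cos s + R) / (b * sin s)"
    using R sin_s b sin_cos_squared_add[of s] R2
    by (simp add: tan_def sec_def sin_add cos_add cos_cp sin_cp field_simps power2_eq_square)
qed

lemma tanh_half_abs_ln_tan_sec:
  fixes s D :: real
  assumes "0 < s" and "s < pi"
  defines "cp \<equiv> arctan ((cos s - exp D) / sin s)"
  shows "(tanh (\<bar>ln ((tan (cp + s) + sec (cp + s)) / (tan cp + sec cp))\<bar> / 2))\<^sup>2
           = (cosh D - cos s) / (cosh D + 1)"
proof -
  define b where "b = exp D"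
  define R where "R = sqrt ((cos s - b)\<^sup>2 + (sin s)\<^sup>2)"
  define v where "v = (tan (cp + s) + sec (cp + s)) / (tan cp + sec cp)"
  have b: "b > 0" by (simp add: b_def)
  have sin_s: "sin s > 0" using assms by (simp add: sin_gt_zero)
  have cos_s: "-1 < cos s" "cos s < 1"
    using assms cos_mono_less_eq[of pi s] cos_mono_less_eq[of s 0] by simp_all
  have R: "R > 0" using sin_s by (simp add: R_def add_nonneg_pos)
  have R2_sum: "R\<^sup>2 = (cos s - b)\<^sup>2 + (sin s)\<^sup>2" by (simp add: R_def)
  also have "\<dots> = b\<^sup>2 - 2 * b * cos s + 1"
    using sin_cos_squared_add[of s] by (simp add: power2_eq_square algebra_simps)
  finally have R2: "R\<^sup>2 = b\<^sup>2 - 2 * b * cos s + 1" .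
  have v: "v = (1 - b * cos s + R) / (b * (cos s - b + R))"
    using sin_s b tan_plus_sec_arctan[OF sin_s, of b] by (simp add: v_def cp_def R_def b_def)
  have "b * cos s < b" using cos_s b by simp
  then have "(b - 1)\<^sup>2 < R\<^sup>2"
    using R2 by (simp add: power2_eq_square algebra_simps)
  moreover have "(b - cos s)\<^sup>2 < R\<^sup>2"
    using R2_sum sin_s by (simp add: power2_commute)
  ultimately have "b - 1 < R" "b - cos s < R"
    using R by (simp_all add: power2_less_imp_less)
  moreover have "(1 - b * cos s + R) + b * (cos s - b + R) = (1 + b) * (R + 1 - b)"
    by (simp add: algebra_simps)
  moreover have "(1 - b * cos s + R) - b * (cos s - b + R) = R * (R + 1 - b)"
    using R2 by (simp add: algebra_simps power2_eq_square)
  ultimately have "v \<noteq> -1" and "(v - 1) / (v + 1) = R / (1 + b)"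
    using b quotient_minus_one_over_plus_one[of "b * (cos s - b + R)" "1 - b * cos s + R"]
    by (simp_all add: v)
  moreover have "(R / (1 + b))\<^sup>2 = (cosh D - cos s) / (cosh D + 1)"
    unfolding cosh_ratio_eq_exp b_def[symmetric] by (simp add: power_divide R2 add.commute)
  ultimately show ?thesis
    using tanh_half_abs_ln[of v] cosh_ratio_less_1[of "cos s" D] cos_s by (simp add: v_def)
qed

lemma mobius_sq_of_sqrt_ratio:
  fixes a b c :: real
  assumes a: "a > 1" and b: "b > 0" and E: "a * b - 1 \<noteq> 0" and c: "c > 0"
    and c2: "c\<^sup>2 = a * (b - a) / (a * b - 1)"
  defines "v \<equiv> ((a + c) * (c - 1)) / ((c - a) * (c + 1))"
  shows "v \<noteq> -1" and "((v - 1) / (v + 1))\<^sup>2 = (b - a) * (a * b - 1) / (a * (b + 1)\<^sup>2)"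
proof -
  define q where "q = c\<^sup>2"
  have "a\<^sup>2 > 1" using a by (simp add: one_less_power)
  then have "1 - a\<^sup>2 \<noteq> 0" by linarith
  then have "a * b * (1 - a\<^sup>2) \<noteq> 0" using a b by simp
  moreover have "q - a\<^sup>2 = a * b * (1 - a\<^sup>2) / (a * b - 1)"
    unfolding q_def c2 using E by (simp add: field_simps power2_eq_square)
  ultimately have "q - a\<^sup>2 \<noteq> 0" using E by (simp only: divide_eq_0_iff) simp
  then have Q: "(c - a) * (c + 1) \<noteq> 0" using c by (auto simp: q_def)
  have q_minus_a: "q - a = - (a * (a - 1) * (b + 1)) / (a * b - 1)"
    unfolding q_def c2 using E by (simp add: field_simps)
  have q_ne_a: "q - a \<noteq> 0"
    using a b E by (simp add: q_minus_a)
  have P_plus_Q_eq: "(a + c) * (c - 1) + (c - a) * (c + 1) = 2 * (q - a)"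
    by (simp add: q_def power2_eq_square algebra_simps)
  have P_minus_Q_eq: "(a + c) * (c - 1) - (c - a) * (c + 1) = 2 * (c * (a - 1))"
    by (simp add: algebra_simps)
  have P_plus_Q: "(a + c) * (c - 1) + (c - a) * (c + 1) \<noteq> 0"
    using q_ne_a by (simp add: P_plus_Q_eq)
  show "v \<noteq> -1"
    unfolding v_def by (fact quotient_minus_one_over_plus_one(1)[OF Q P_plus_Q])
  have "(v - 1) / (v + 1)
      = ((a + c) * (c - 1) - (c - a) * (c + 1)) / ((a + c) * (c - 1) + (c - a) * (c + 1))"
    unfolding v_def by (fact quotient_minus_one_over_plus_one(2)[OF Q P_plus_Q])
  also have "\<dots> = c * (a - 1) / (q - a)"
    unfolding P_minus_Q_eq P_plus_Q_eq by (rule mult_divide_mult_cancel_left) simp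
  also have "\<dots> = - (c * (a * b - 1)) / (a * (b + 1))"
  proof -
    have "- (c * (a * b - 1)) * (q - a) = - c * ((q - a) * (a * b - 1))"
      by (simp add: algebra_simps)
    also have "\<dots> = c * (a - 1) * (a * (b + 1))"
      using E by (simp add: q_minus_a ac_simps)
    finally have "c * (a - 1) * (a * (b + 1)) = - (c * (a * b - 1)) * (q - a)" ..
    moreover have "a * (b + 1) \<noteq> 0" using a b by simp
    ultimately show ?thesis
      using frac_eq_eq[OF q_ne_a] by blast
  qed
  finally have "((v - 1) / (v + 1))\<^sup>2 = c\<^sup>2 * (a * b - 1)\<^sup>2 / (a * (b + 1))\<^sup>2"
    by (simp add: power_divide power_mult_distrib)
  also have "c\<^sup>2 * (a * b - 1)\<^sup>2 = a * ((b - a) * (a * b - 1))"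
    unfolding c2 using E by (simp add: power2_eq_square)
  also have "a * ((b - a) * (a * b - 1)) / (a * (b + 1))\<^sup>2
      = (b - a) * (a * b - 1) / (a * (b + 1)\<^sup>2)"
    using a by (simp add: power_mult_distrib power2_eq_square)
  finally show "((v - 1) / (v + 1))\<^sup>2 = (b - a) * (a * b - 1) / (a * (b + 1)\<^sup>2)" .
qed

lemma tanh_half_abs_ln_exp_ratio:
  fixes s D :: real
  assumes "0 < s" and "s < \<bar>D\<bar>"
  defines "c \<equiv> sqrt (- ((exp (2 * s) - exp (D + s)) / (exp (D + s) - 1)))"
  shows "(tanh (\<bar>ln (((exp s / c + 1) * (- (1 / c) + 1)) / ((1 - exp s / c) * (1 + 1 / c)))\<bar>
             / 2))\<^sup>2 = (cosh D - cosh s) / (cosh D + 1)"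
proof -
  define a where "a = exp s"
  define b where "b = exp D"
  define v where "v = ((exp s / c + 1) * (- (1 / c) + 1)) / ((1 - exp s / c) * (1 + 1 / c))"
  have a: "a > 1" and b: "b > 0" using assms by (simp_all add: a_def b_def)
  have "D - s > 0 \<and> D + s > 0 \<or> D - s < 0 \<and> D + s < 0"
    using assms by linarith
  then have "0 < (b - a) * (a * b - 1)"
    by (auto simp: a_def b_def zero_less_mult_iff mult_less_0_iff simp flip: exp_add)
  then have E: "a * b - 1 \<noteq> 0" and "0 < (b - a) / (a * b - 1)"
    by (auto simp: zero_less_mult_iff zero_less_divide_iff)
  then have q: "a * (b - a) / (a * b - 1) > 0"
    using a by (metis mult_pos_pos order.strict_trans times_divide_eq_right zero_less_one)
  have "exp (2 * s) = a * a" "exp (D + s) = a * b"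
    by (simp_all add: a_def b_def mult.commute flip: exp_add)
  then have "c = sqrt (a * (b - a) / (a * b - 1))"
    unfolding c_def by (simp add: minus_divide_left algebra_simps)
  then have c: "c > 0" and c2: "c\<^sup>2 = a * (b - a) / (a * b - 1)" using q by simp_all
  have "exp s / c + 1 = (a + c) / c" "- (1 / c) + 1 = (c - 1) / c"
    "1 - exp s / c = (c - a) / c" "1 + 1 / c = (c + 1) / c"
    using c by (simp_all add: a_def field_simps)
  then have v: "v = ((a + c) * (c - 1)) / ((c - a) * (c + 1))"
    using c by (simp add: v_def times_divide_times_eq)
  have cosh_s: "cosh s = (a + 1 / a) / 2"
    by (simp add: a_def cosh_field_def exp_minus inverse_eq_divide)
  have "b\<^sup>2 - 2 * b * cosh s + 1 = (b - a) * (a * b - 1) / a"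
    using a unfolding cosh_s by (simp add: field_simps power2_eq_square)
  then have "((v - 1) / (v + 1))\<^sup>2 = (cosh D - cosh s) / (cosh D + 1)"
    unfolding v mobius_sq_of_sqrt_ratio(2)[OF a b E c c2] cosh_ratio_eq_exp b_def[symmetric]
    by (simp add: add.commute)
  moreover have "v \<noteq> -1"
    unfolding v by (fact mobius_sq_of_sqrt_ratio(1)[OF a b E c c2])
  ultimately have "(tanh (\<bar>ln v\<bar> / 2))\<^sup>2 = (cosh D - cosh s) / (cosh D + 1)"
    using tanh_half_abs_ln[of v] cosh_ratio_less_1[of "cosh s" D] cosh_real_ge_1[of s] by simp
  then show ?thesis by (simp only: v_def)
qed

lemma tanh_half_abs_sq:
  fixes D :: real
  shows "(tanh (\<bar>D\<bar> / 2))\<^sup>2 = (cosh D - 1) / (cosh D + 1)"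
proof -
  have "((exp D - 1) / (exp D + 1))\<^sup>2 = (cosh D - 1) / (cosh D + 1)"
    unfolding cosh_ratio_eq_exp by (simp add: power_divide power2_eq_square algebra_simps)
  moreover have "exp D \<noteq> -1"
    using exp_gt_zero[of D] by linarith
  ultimately show ?thesis
    using tanh_half_abs_ln[of "exp D"] cosh_ratio_less_1[of 1 D] by simp
qed

definition cos_sqrt :: "real \<Rightarrow> real" where
  "cos_sqrt x = (if x < 0 then cosh (sqrt (- x)) else cos (sqrt x))"

lemma cos_sqrt_antimono:
  assumes "x \<le> y" and "y \<le> pi\<^sup>2"
  shows "cos_sqrt y \<le> cos_sqrt x"
proof (cases "y < 0")
  case True
  then show ?thesis
    using assms by (simp add: cos_sqrt_def cosh_real_nonneg_le_iff)
next
  case y: False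
  show ?thesis
  proof (cases "x < 0")
    case True
    have "cos (sqrt y) \<le> cosh (sqrt (- x))"
      using cos_le_one[of "sqrt y"] cosh_real_ge_1[of "sqrt (- x)"] by linarith
    then show ?thesis using True y by (simp add: cos_sqrt_def)
  next
    case False
    have "sqrt y \<le> pi"
      using assms(2) real_sqrt_le_mono[of y "pi\<^sup>2"] by simp
    moreover have "sqrt x \<le> sqrt y" using assms(1) by simp
    ultimately have "cos (sqrt y) \<le> cos (sqrt x)"
      using False y by (intro cos_monotone_0_pi_le) auto
    then show ?thesis using False y by (simp add: cos_sqrt_def)
  qed
qed

lemma mfun_nonneg: "mfun d D l \<ge> 0"
  unfolding mfun_def Let_def by auto

lemma tanh_half_mfun_sq:
  assumes d: "d > 0" and l: "- D\<^sup>2 / real d \<le> l" "l < pi\<^sup>2 / real d"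
  shows "(tanh (mfun d D l / 2))\<^sup>2 = (cosh D - cos_sqrt (real d * l)) / (cosh D + 1)"
proof -
  consider (left_end) "l < 0" "l = - D\<^sup>2 / real d" | (neg) "- D\<^sup>2 / real d < l" "l < 0"
    | (zero) "l = 0" | (pos) "l > 0"
    using l by linarith
  then show ?thesis
  proof cases
    case left_end
    then have "real d * l = - D\<^sup>2" using d by simp
    then show ?thesis using left_end by (simp add: mfun_def cos_sqrt_def)
  next
    case neg
    define s where "s = sqrt (real d * - l)"
    have "real d * - l < D\<^sup>2" using neg d by (simp add: field_simps)
    then have "0 < s" "s < \<bar>D\<bar>"
      using neg d real_sqrt_less_mono[of "real d * - l" "D\<^sup>2"]
      by (simp_all add: s_def mult_pos_neg)
    then show ?thesis
      using neg tanh_half_abs_ln_exp_ratio[of s D]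
      by (simp add: mfun_def Let_def Cminus_def cos_sqrt_def s_def mult_pos_neg)
  next
    case zero
    then show ?thesis by (simp add: mfun_def cos_sqrt_def tanh_half_abs_sq)
  next
    case pos
    define s where "s = sqrt (real d * l)"
    have "real d * l < pi\<^sup>2" using l d by (simp add: field_simps)
    then have "0 < s" "s < pi"
      using pos d real_sqrt_less_mono[of "real d * l" "pi\<^sup>2"] by (simp_all add: s_def)
    then show ?thesis
      using pos tanh_half_abs_ln_tan_sec[of s D]
      by (simp add: mfun_def Let_def Cplus_def cos_sqrt_def s_def)
  qed
qed

theorem lemma3p6:
  fixes d :: nat and Ds :: "nat \<Rightarrow> real" and D :: real
  assumes "d \<ge> 2"
    and "D = (\<Sum>i=1..d. Ds i)"
  shows "mono_on {- D\<^sup>2 / real d ..< pi\<^sup>2 / real d} (mfun d D)"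
proof (rule mono_onI)
  fix l l' assume l: "l \<in> {- D\<^sup>2 / real d ..< pi\<^sup>2 / real d}"
    and l': "l' \<in> {- D\<^sup>2 / real d ..< pi\<^sup>2 / real d}" and "l \<le> l'"
  have d: "d > 0" using assms(1) by simp
  have "real d * l' \<le> pi\<^sup>2" using l' d by (simp add: field_simps)
  then have "cos_sqrt (real d * l') \<le> cos_sqrt (real d * l)"
    using \<open>l \<le> l'\<close> by (intro cos_sqrt_antimono) (simp_all add: mult_left_mono)
  then have "(cosh D - cos_sqrt (real d * l)) / (cosh D + 1)
             \<le> (cosh D - cos_sqrt (real d * l')) / (cosh D + 1)"
    using cosh_real_ge_1[of D] by (intro divide_right_mono) simp_all
  then have "(tanh (mfun d D l / 2))\<^sup>2 \<le> (tanh (mfun d D l' / 2))\<^sup>2"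
    using l l' by (simp only: tanh_half_mfun_sq[OF d] atLeastLessThan_iff)
  moreover have "tanh (mfun d D l' / 2) \<ge> 0" using mfun_nonneg[of d D l'] by simp
  ultimately have "tanh (mfun d D l / 2) \<le> tanh (mfun d D l' / 2)"
    by (rule power2_le_imp_le)
  then show "mfun d D l \<le> mfun d D l'" by simp
qed

end
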